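(* For any finite-rank $S,T\in\mathfrak S_1(\mathbb T)$, $$d(S,T)=\rho_1(f_S,f_T).$$
   Context: Rigged sets: each point has a multiplicity in $\{0,1,\dots,\infty\}$; an enumeration lists each point according to its multiplicity. $\mathfrak S_1(\mathbb T)$ is the set of countable rigged subsets of the unit circle $\mathbb T$ (identified with $[0,2\pi)$, arc-length metric) in which $1$ has infinite multiplicity, with no other accumulation point and with $d(S,\mathbf 1)<\infty$, where $d(S,T)=\inf\sum_j\mathrm{dist}(s_j,t_j)$ over enumerations $(s_j),(t_j)$ of $S,T$ and $\mathbf 1$ is $1$ with infinite multiplicity. $S$ has finite rank if it has finitely many points other than $1$ counting multiplicity. For such $S$, $f_S$ is the class, modulo addition of integer constants, of the function $(0,2\pi)\ni\theta\mapsto\#\{s\in S\setminus\{1\}:\theta<\arg s\}$ (counting multiplicity, $\arg s\in(0,2\pi)$). For two such classes $f,g$, $\rho_1(f,g)=\inf\int_0^{2\pi}|\tilde f(\theta)-\tilde g(\theta)|\,d\theta$ over all representatives $\tilde f$ of $f$ and $\tilde g$ of $g$. *)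

theory Defs
  imports "HOL-Analysis.Analysis" "HOL-Library.Extended_Nat"
begin

(* Points of the unit circle are represented by their angles in [0, 2*pi);
   the point 1 corresponds to angle 0.  A rigged subset is a multiplicity
   function on angles, zero outside [0, 2*pi). *)

definition dist_circ :: "real \<Rightarrow> real \<Rightarrow> real" where
  "dist_circ a b = min \<bar>a - b\<bar> (2 * pi - \<bar>a - b\<bar>)"

definition rigged :: "(real \<Rightarrow> enat) \<Rightarrow> bool" where
  "rigged m \<longleftrightarrow> (\<forall>x. m x \<noteq> 0 \<longrightarrow> 0 \<le> x \<and> x < 2 * pi)"

definition occ :: "(nat \<Rightarrow> real) \<Rightarrow> real \<Rightarrow> enat" where
  "occ s x = (if finite {j. s j = x} then enat (card {j. s j = x}) else \<infinity>)"

definition enumerates :: "(nat \<Rightarrow> real) \<Rightarrow> (real \<Rightarrow> enat) \<Rightarrow> bool" where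
  "enumerates s m \<longleftrightarrow> (\<forall>x. occ s x = m x)"

definition rdist :: "(real \<Rightarrow> enat) \<Rightarrow> (real \<Rightarrow> enat) \<Rightarrow> ennreal" where
  "rdist S T = (INF st \<in> {(s, t). enumerates s S \<and> enumerates t T}.
                  (\<Sum>j. ennreal (dist_circ (fst st j) (snd st j))))"

definition one_rig :: "real \<Rightarrow> enat" where
  "one_rig x = (if x = 0 then \<infinity> else 0)"

definition S1 :: "(real \<Rightarrow> enat) set" where
  "S1 = {m. rigged m \<and> countable {x. m x \<noteq> 0} \<and> m 0 = \<infinity> \<and>
           (\<forall>x. 0 < x \<and> x < 2 * pi \<longrightarrow>
              m x \<noteq> \<infinity> \<and> (\<exists>e>0. finite {y. m y \<noteq> 0 \<and> dist_circ x y < e})) \<and>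
           rdist m one_rig < \<infinity>}"

definition finite_rank :: "(real \<Rightarrow> enat) \<Rightarrow> bool" where
  "finite_rank m \<longleftrightarrow> finite {x. x \<noteq> 0 \<and> m x \<noteq> 0} \<and> (\<forall>x. x \<noteq> 0 \<longrightarrow> m x \<noteq> \<infinity>)"

definition fS :: "(real \<Rightarrow> enat) \<Rightarrow> real \<Rightarrow> real" where
  "fS m \<theta> = (\<Sum>x\<in>{x. x \<noteq> 0 \<and> m x \<noteq> 0 \<and> \<theta> < x}. real (the_enat (m x)))"

(* rho_1 of the classes of f and g modulo integer constants *)
definition rho1 :: "(real \<Rightarrow> real) \<Rightarrow> (real \<Rightarrow> real) \<Rightarrow> real" where
  "rho1 f g = Inf {integral {0..2 * pi} (\<lambda>\<theta>. \<bar>(f \<theta> + of_int a) - (g \<theta> + of_int b)\<bar>) | a b :: int. True}"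

end

theory Submission
  imports Defs
begin

(*
  A finite-rank S is a finite multiset A of points of (0, 2pi), the point 1 (angle 0) having
  infinite multiplicity, and f_S is the counting function of A.  Thus an enumeration of S and T
  is a finite matching between A and B, padded by copies of 0.

  A single pair (x, y) costs exactly the L1 norm of a suitable integer translate of the
  difference of the counting functions of {x} and {y}; by the triangle inequality in L1 every
  matching costs at least the L1 norm of some translate of f_S - f_T, so rho_1 <= d.

  Conversely, for every integer c a greedy matching costs at most the L1 norm of
  f_S - f_T - c.  Let x be the leftmost point of A + B, say in A, and d the value of
  f_S - f_T - c just left of x.  If d >= 1, match x with 1 going down (cost x); otherwise, if B
  is empty, match x with 1 going up (cost 2pi - x, replacing c by c - 1), else with the
  leftmost point y of B (cost y - x).  In each case removing the pair lowers the L1 norm by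
  exactly the bound on its cost.
*)

lemma dist_circ_commute: "dist_circ a b = dist_circ b a"
  by (simp add: dist_circ_def abs_minus_commute)

lemma dist_circ_nonneg: "\<bar>a - b\<bar> \<le> 2*pi \<Longrightarrow> 0 \<le> dist_circ a b"
  by (simp add: dist_circ_def)

definition count_above :: "real multiset \<Rightarrow> real \<Rightarrow> real" where
  "count_above A \<theta> = (\<Sum>x\<in>#A. indicator {..<x} \<theta>)"

lemma count_above_empty [simp]: "count_above {#} \<theta> = 0"
  by (simp add: count_above_def)

lemma count_above_add_mset [simp]:
  "count_above (add_mset x A) \<theta> = indicator {..<x} \<theta> + count_above A \<theta>"
  by (simp add: count_above_def)

lemma count_above_union [simp]:
  "count_above (A + B) \<theta> = count_above A \<theta> + count_above B \<theta>"
  by (simp add: count_above_def)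

lemma count_above_le_size: "count_above A \<theta> \<le> size A"
  by (induction A) (auto simp: indicator_def)

lemma count_above_eq_size:
  "(\<And>x. x \<in># A \<Longrightarrow> \<theta> < x) \<Longrightarrow> count_above A \<theta> = size A"
  by (induction A) auto

lemma count_above_zeros: "0 \<le> \<theta> \<Longrightarrow> count_above (replicate_mset k 0) \<theta> = 0"
  by (induction k) auto

lemma has_integral_indicator_lessThan:
  fixes l a u :: real
  assumes "l \<le> a" "a \<le> u"
  shows "((indicator {..<a} :: real \<Rightarrow> real) has_integral (a - l)) {l..u}"
proof -
  have "((\<lambda>x. if x \<in> {l..a} then (1::real) else 0) has_integral (a - l)) {l..u}"
    using assms has_integral_const_real[of "1::real" l a] by (subst has_integral_restrict) auto
  then show ?thesis
    by (rule has_integral_spike[where S="{a}", rotated 2]) (auto simp: indicator_def)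
qed

lemma absolutely_integrable_indicator_lessThan:
  "(indicator {..<a} :: real \<Rightarrow> real) absolutely_integrable_on {l..u}"
proof -
  have "{..<a} \<inter> {l..u} \<in> lmeasurable"
    by (subst Int_commute) (intro fmeasurable_Int_fmeasurable; simp)
  then show ?thesis
    by (intro nonnegative_absolutely_integrable_1) (auto simp: integrable_on_indicator)
qed

lemma absolutely_integrable_count_above: "count_above A absolutely_integrable_on {l..u}"
  by (induction A)
     (simp_all add: absolutely_integrable_indicator_lessThan)

definition L1_gap :: "real multiset \<Rightarrow> real multiset \<Rightarrow> int \<Rightarrow> real" where
  "L1_gap A B c = integral {0..2*pi} (\<lambda>\<theta>. \<bar>count_above A \<theta> - count_above B \<theta> - of_int c\<bar>)"

lemma integrable_abs_count_above_diff:
  "(\<lambda>\<theta>. \<bar>count_above A \<theta> - count_above B \<theta> - of_int c\<bar>) integrable_on {l..u}"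
proof -
  have "(\<lambda>\<theta>. count_above A \<theta> - count_above B \<theta> - of_int c) absolutely_integrable_on {l..u}"
    by (intro set_integral_diff(1) absolutely_integrable_count_above absolutely_integrable_on_const) auto
  then show ?thesis
    by (simp add: absolutely_integrable_on_def)
qed

lemma L1_gap_nonneg: "0 \<le> L1_gap A B c"
  unfolding L1_gap_def by (rule integral_nonneg[OF integrable_abs_count_above_diff]) auto

lemma L1_gap_commute: "L1_gap B A (- c) = L1_gap A B c"
  unfolding L1_gap_def by (intro integral_cong) (simp add: abs_minus_commute)

lemma L1_gap_add_zeros: "L1_gap (A + replicate_mset k 0) (B + replicate_mset l 0) c = L1_gap A B c"
  unfolding L1_gap_def by (intro integral_cong) (simp add: count_above_zeros)

lemma L1_gap_union_le: "L1_gap (A + A') (B + B') (c + c') \<le> L1_gap A B c + L1_gap A' B' c'"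
proof -
  have "L1_gap (A + A') (B + B') (c + c') \<le> integral {0..2*pi}
      (\<lambda>\<theta>. \<bar>count_above A \<theta> - count_above B \<theta> - of_int c\<bar> +
           \<bar>count_above A' \<theta> - count_above B' \<theta> - of_int c'\<bar>)"
    unfolding L1_gap_def
    by (intro integral_le integrable_abs_count_above_diff integrable_add) auto
  also have "\<dots> = L1_gap A B c + L1_gap A' B' c'"
    unfolding L1_gap_def by (intro integral_add integrable_abs_count_above_diff)
  finally show ?thesis .
qed

lemma L1_gap_split:
  assumes "\<And>\<theta>. \<theta> \<in> {0..2*pi} \<Longrightarrow> \<bar>count_above A \<theta> - count_above B \<theta> - of_int c\<bar> =
             \<bar>count_above A' \<theta> - count_above B' \<theta> - of_int c'\<bar> + h \<theta>"
    and "(h has_integral L) {0..2*pi}"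
  shows "L1_gap A B c = L1_gap A' B' c' + L"
proof -
  have "L1_gap A B c = integral {0..2*pi}
      (\<lambda>\<theta>. \<bar>count_above A' \<theta> - count_above B' \<theta> - of_int c'\<bar> + h \<theta>)"
    unfolding L1_gap_def using assms(1) by (intro integral_cong) auto
  also have "\<dots> = L1_gap A' B' c' + L"
    unfolding L1_gap_def using assms(2) integrable_abs_count_above_diff
    by (simp add: integral_add integral_unique has_integral_integrable)
  finally show ?thesis .
qed

lemma L1_gap_singletons:
  assumes "x \<in> {0..<2*pi}" "y \<in> {0..<2*pi}"
  shows "\<exists>c. L1_gap {#x#} {#y#} c = dist_circ x y"
proof -
  have gap: "L1_gap {#x#} {#y#} c =
      integral {0..2*pi} (\<lambda>\<theta>. \<bar>indicator {..<x} \<theta> - indicator {..<y} \<theta> - of_int c\<bar>)" for c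
    by (simp add: L1_gap_def)
  have ind: "z \<in> {0..<2*pi} \<Longrightarrow> (indicator {..<z} has_integral z) {0..2*pi}" for z
    using has_integral_indicator_lessThan[of 0 z "2*pi"] by simp
  have one: "((\<lambda>\<theta>. 1::real) has_integral 2*pi) {0..2*pi}"
    using has_integral_const_real[of "1::real" 0 "2*pi"] by simp
  consider "\<bar>x - y\<bar> \<le> 2*pi - \<bar>x - y\<bar>" | "y < x" "2*pi - \<bar>x - y\<bar> < \<bar>x - y\<bar>"
    | "x \<le> y" "2*pi - \<bar>x - y\<bar> < \<bar>x - y\<bar>"
    by linarith
  then show ?thesis
  proof cases
    case 1
    have "L1_gap {#x#} {#y#} 0 =
        integral {0..2*pi} (\<lambda>\<theta>. indicator {..<max x y} \<theta> - indicator {..<min x y} \<theta>)"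
      unfolding gap by (intro integral_cong) (auto simp: indicator_def)
    also have "\<dots> = max x y - min x y"
      using assms by (intro integral_unique has_integral_diff ind) auto
    also have "\<dots> = dist_circ x y"
      using 1 by (auto simp: dist_circ_def)
    finally show ?thesis ..
  next
    case 2
    have "L1_gap {#x#} {#y#} 1 =
        integral {0..2*pi} (\<lambda>\<theta>. (1 - indicator {..<x} \<theta>) + indicator {..<y} \<theta>)"
      unfolding gap using 2 by (intro integral_cong) (auto simp: indicator_def)
    also have "\<dots> = (2*pi - x) + y"
      using assms by (intro integral_unique has_integral_diff has_integral_add one ind)
    also have "\<dots> = dist_circ x y"
      using 2 by (auto simp: dist_circ_def)
    finally show ?thesis ..
  next
    case 3
    have "L1_gap {#x#} {#y#} (- 1) =
        integral {0..2*pi} (\<lambda>\<theta>. (1 - indicator {..<y} \<theta>) + indicator {..<x} \<theta>)"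
      unfolding gap using 3 by (intro integral_cong) (auto simp: indicator_def)
    also have "\<dots> = (2*pi - y) + x"
      using assms by (intro integral_unique has_integral_diff has_integral_add one ind)
    also have "\<dots> = dist_circ x y"
      using 3 by (auto simp: dist_circ_def)
    finally show ?thesis ..
  qed
qed

lemma L1_gap_add_below:
  assumes "0 \<le> x" "x \<le> 2*pi"
    and "\<And>\<theta>. 0 \<le> \<theta> \<Longrightarrow> \<theta> < x \<Longrightarrow> 0 \<le> count_above A \<theta> - count_above B \<theta> - of_int c"
  shows "L1_gap (add_mset x A) B c = L1_gap A B c + x"
proof (rule L1_gap_split[where h = "indicator {..<x}"])
  show "(indicator {..<x} has_integral x) {0..2*pi}"
    using has_integral_indicator_lessThan[of 0 x "2*pi"] assms by simp
  fix \<theta> :: real assume "\<theta> \<in> {0..2*pi}"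
  then show "\<bar>count_above (add_mset x A) \<theta> - count_above B \<theta> - of_int c\<bar> =
      \<bar>count_above A \<theta> - count_above B \<theta> - of_int c\<bar> + indicator {..<x} \<theta>"
    using assms(3)[of \<theta>] by (cases "\<theta> < x") (auto simp: indicator_def)
qed

lemma L1_gap_add_above:
  assumes "0 \<le> x" "x \<le> 2*pi"
    and "\<And>\<theta>. x \<le> \<theta> \<Longrightarrow> \<theta> \<le> 2*pi \<Longrightarrow> count_above A \<theta> - count_above B \<theta> - of_int (c - 1) \<le> 0"
  shows "L1_gap (add_mset x A) B c = L1_gap A B (c - 1) + (2*pi - x)"
proof (rule L1_gap_split[where h = "\<lambda>\<theta>. 1 - indicator {..<x} \<theta>"])
  show "((\<lambda>\<theta>. 1 - indicator {..<x} \<theta>) has_integral (2*pi - x)) {0..2*pi}"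
    using has_integral_diff[OF has_integral_const_real[of "1::real" 0 "2*pi"]
        has_integral_indicator_lessThan[of 0 x "2*pi"]] assms
    by simp
  fix \<theta> :: real assume "\<theta> \<in> {0..2*pi}"
  then show "\<bar>count_above (add_mset x A) \<theta> - count_above B \<theta> - of_int c\<bar> =
      \<bar>count_above A \<theta> - count_above B \<theta> - of_int (c - 1)\<bar> + (1 - indicator {..<x} \<theta>)"
    using assms(3)[of \<theta>] by (cases "\<theta> < x") (auto simp: indicator_def)
qed

lemma L1_gap_add_pair:
  assumes "0 \<le> x" "x \<le> y" "y \<le> 2*pi"
    and "\<And>\<theta>. x \<le> \<theta> \<Longrightarrow> \<theta> < y \<Longrightarrow> count_above A \<theta> - count_above B \<theta> - of_int c \<le> 0"
  shows "L1_gap (add_mset x A) (add_mset y B) c = L1_gap A B c + (y - x)"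
proof (rule L1_gap_split[where h = "\<lambda>\<theta>. indicator {..<y} \<theta> - indicator {..<x} \<theta>"])
  show "((\<lambda>\<theta>. indicator {..<y} \<theta> - indicator {..<x} \<theta>) has_integral (y - x)) {0..2*pi}"
    using has_integral_diff[OF has_integral_indicator_lessThan[of 0 y "2*pi"]
        has_integral_indicator_lessThan[of 0 x "2*pi"]] assms
    by simp
  fix \<theta> :: real assume "\<theta> \<in> {0..2*pi}"
  then show "\<bar>count_above (add_mset x A) \<theta> - count_above (add_mset y B) \<theta> - of_int c\<bar> =
      \<bar>count_above A \<theta> - count_above B \<theta> - of_int c\<bar> + (indicator {..<y} \<theta> - indicator {..<x} \<theta>)"
    using assms(2) assms(4)[of \<theta>] by (cases "\<theta> < x"; cases "\<theta> < y") (auto simp: indicator_def)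
qed

definition cost :: "(real \<times> real) multiset \<Rightarrow> real" where
  "cost M = (\<Sum>p\<in>#M. dist_circ (fst p) (snd p))"

text \<open>Points may also be matched with 1, i.e. with the padding zeros.\<close>

definition matching :: "(real \<times> real) multiset \<Rightarrow> real multiset \<Rightarrow> real multiset \<Rightarrow> bool" where
  "matching M A B \<longleftrightarrow> (\<exists>k l. image_mset fst M = A + replicate_mset k 0 \<and>
                                image_mset snd M = B + replicate_mset l 0)"

lemma cost_add_mset [simp]: "cost (add_mset p M) = dist_circ (fst p) (snd p) + cost M"
  by (simp add: cost_def)

lemma matching_add_mset:
  "matching M A B \<Longrightarrow> matching (add_mset (x, y) M) (add_mset x A) (add_mset y B)"
  unfolding matching_def by auto

lemma matching_add_mset_zero:
  "matching M A B \<Longrightarrow> matching (add_mset (x, 0) M) (add_mset x A) B"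
  unfolding matching_def by (metis fst_conv snd_conv image_mset_add_mset add_mset_add_single
      replicate_mset_Suc union_assoc union_commute)

lemma matching_swap: "matching M A B \<Longrightarrow> matching (image_mset prod.swap M) B A"
  unfolding matching_def by (auto simp: image_mset.compositionality o_def)

lemma cost_swap: "cost (image_mset prod.swap M) = cost M"
  unfolding cost_def by (simp add: image_mset.compositionality o_def dist_circ_commute)

lemma L1_gap_le_cost:
  assumes "\<And>p. p \<in># M \<Longrightarrow> fst p \<in> {0..<2*pi} \<and> snd p \<in> {0..<2*pi}"
  shows "\<exists>c. L1_gap (image_mset fst M) (image_mset snd M) c \<le> cost M"
  using assms
proof (induction M)
  case empty
  have "L1_gap {#} {#} 0 = 0"
    by (simp add: L1_gap_def)
  then show ?case
    by (auto simp: cost_def intro!: exI[of _ 0])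
next
  case (add p M)
  obtain c where c: "L1_gap (image_mset fst M) (image_mset snd M) c \<le> cost M"
    using add by auto
  obtain c' where c': "L1_gap {#fst p#} {#snd p#} c' = dist_circ (fst p) (snd p)"
    using L1_gap_singletons add.prems[of p] by auto
  have "L1_gap ({#fst p#} + image_mset fst M) ({#snd p#} + image_mset snd M) (c' + c)
      \<le> L1_gap {#fst p#} {#snd p#} c' + L1_gap (image_mset fst M) (image_mset snd M) c"
    by (rule L1_gap_union_le)
  then show ?case
    using c c' by (intro exI[of _ "c' + c"]) simp
qed

lemma matching_cost_lower:
  assumes "matching M A B" "set_mset A \<subseteq> {0..<2*pi}" "set_mset B \<subseteq> {0..<2*pi}"
  shows "\<exists>c. L1_gap A B c \<le> cost M"
proof -
  obtain k l where k: "image_mset fst M = A + replicate_mset k 0"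
    and l: "image_mset snd M = B + replicate_mset l 0"
    using assms(1) unfolding matching_def by blast
  have "fst p \<in> {0..<2*pi} \<and> snd p \<in> {0..<2*pi}" if "p \<in># M" for p
  proof -
    have "fst p \<in># A + replicate_mset k 0" "snd p \<in># B + replicate_mset l 0"
      using that by (simp_all flip: k l)
    then show ?thesis
      using assms(2,3) by (auto split: if_splits)
  qed
  then show ?thesis
    using L1_gap_le_cost[of M] by (simp add: k l L1_gap_add_zeros)
qed

definition gap_matchable :: "real multiset \<Rightarrow> real multiset \<Rightarrow> int \<Rightarrow> bool" where
  "gap_matchable A B c \<longleftrightarrow> (\<exists>M. matching M A B \<and> cost M \<le> L1_gap A B c)"

lemma gap_matchable_commute: "gap_matchable B A (- c) \<Longrightarrow> gap_matchable A B c"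
  unfolding gap_matchable_def L1_gap_commute using matching_swap cost_swap by metis

lemma gap_matchable_add_mset:
  assumes "gap_matchable A B c'" "L1_gap (add_mset x A) (add_mset y B) c = L1_gap A B c' + \<delta>"
    "dist_circ x y \<le> \<delta>"
  shows "gap_matchable (add_mset x A) (add_mset y B) c"
proof -
  obtain M where "matching M A B" "cost M \<le> L1_gap A B c'"
    using assms(1) unfolding gap_matchable_def by blast
  then show ?thesis
    using assms(2,3) unfolding gap_matchable_def
    by (intro exI[of _ "add_mset (x, y) M"]) (simp add: matching_add_mset)
qed

lemma gap_matchable_add_mset_zero:
  assumes "gap_matchable A B c'" "L1_gap (add_mset x A) B c = L1_gap A B c' + \<delta>"
    "dist_circ x 0 \<le> \<delta>"
  shows "gap_matchable (add_mset x A) B c"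
proof -
  obtain M where "matching M A B" "cost M \<le> L1_gap A B c'"
    using assms(1) unfolding gap_matchable_def by blast
  then show ?thesis
    using assms(2,3) unfolding gap_matchable_def
    by (intro exI[of _ "add_mset (x, 0) M"]) (simp add: matching_add_mset_zero)
qed

lemma multiset_split_least:
  fixes B :: "'a::linorder multiset"
  assumes "B \<noteq> {#}"
  obtains y B' where "B = add_mset y B'" "\<And>z. z \<in># B' \<Longrightarrow> y \<le> z"
proof
  show "B = add_mset (Min_mset B) (B - {#Min_mset B#})"
    using assms by simp
  show "Min_mset B \<le> z" if "z \<in># B - {#Min_mset B#}" for z
    using that by (simp add: in_diffD)
qed

lemma L1_gap_greedy_step:
  assumes x: "0 < x" "x < 2*pi" and B: "set_mset B \<subseteq> {..<2*pi}"
    and least: "\<And>z. z \<in># A + B \<Longrightarrow> x \<le> z"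
  shows "L1_gap (add_mset x A) B c = L1_gap A B c + x \<or>
    B = {#} \<and> L1_gap (add_mset x A) B c = L1_gap A B (c - 1) + (2*pi - x) \<or>
    (\<exists>y B'. B = add_mset y B' \<and> x \<le> y \<and> y < 2*pi \<and>
       L1_gap (add_mset x A) B c = L1_gap A B' c + (y - x))"
proof -
  define d where "d = int (size A) - int (size B) - c"
  have below: "count_above A \<theta> - count_above B \<theta> - of_int c = of_int d" if "\<theta> < x" for \<theta>
    using least that by (simp add: d_def count_above_eq_size less_le_trans)
  consider "0 \<le> d" | "d < 0" "B = {#}" | y B' where "d < 0" "B = add_mset y B'"
    "\<And>z. z \<in># B' \<Longrightarrow> y \<le> z"
    using multiset_split_least by (metis linorder_not_le)
  then show ?thesis
  proof cases
    case 1
    then show ?thesis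
      using x below by (intro disjI1 L1_gap_add_below) auto
  next
    case 2
    then have "int (size A) \<le> c - 1"
      by (simp add: d_def)
    then have "count_above A \<theta> \<le> of_int (c - 1)" for \<theta>
      using count_above_le_size[of A \<theta>] by (metis of_int_le_iff of_int_of_nat_eq order_trans)
    then show ?thesis
      using x 2 by (intro disjI2 disjI1 conjI L1_gap_add_above) auto
  next
    case 3
    have y: "x \<le> y" "y < 2*pi"
      using least[of y] B 3(2) by auto
    have "int (size A) \<le> int (size B') + c"
      using 3(1,2) by (simp add: d_def)
    then have "real (size A) \<le> real (size B') + of_int c"
      by (metis of_int_le_iff of_int_of_nat_eq of_int_add)
    moreover have "count_above B' \<theta> = size B'" if "\<theta> < y" for \<theta>
      using 3(3) that by (meson count_above_eq_size less_le_trans)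
    ultimately have "count_above A \<theta> - count_above B' \<theta> - of_int c \<le> 0" if "\<theta> < y" for \<theta>
      using count_above_le_size[of A \<theta>] that by fastforce
    then have "L1_gap (add_mset x A) (add_mset y B') c = L1_gap A B' c + (y - x)"
      using x y by (intro L1_gap_add_pair) auto
    then show ?thesis
      using y 3(2) by blast
  qed
qed

lemma gap_matchable_least_left:
  assumes IH: "\<And>A' B' c'. size A' + size B' < size A + size B \<Longrightarrow> set_mset A' \<subseteq> {0<..<2*pi} \<Longrightarrow>
      set_mset B' \<subseteq> {0<..<2*pi} \<Longrightarrow> gap_matchable A' B' c'"
    and A: "set_mset A \<subseteq> {0<..<2*pi}" and B: "set_mset B \<subseteq> {0<..<2*pi}"
    and x: "x \<in># A" and least: "\<And>z. z \<in># A + B \<Longrightarrow> x \<le> z"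
  shows "gap_matchable A B c"
proof -
  obtain A' where A': "A = add_mset x A'"
    using x by (metis multi_member_split)
  have x_range: "0 < x" "x < 2*pi"
    using A unfolding A' by auto
  have IH': "gap_matchable A' B' c'" if "size B' \<le> size B" "set_mset B' \<subseteq> {0<..<2*pi}" for B' c'
    using IH[of A' B' c'] that A unfolding A' by auto
  have "\<And>z. z \<in># A' + B \<Longrightarrow> x \<le> z" "set_mset B \<subseteq> {..<2*pi}"
    using least B unfolding A' by auto
  from L1_gap_greedy_step[OF x_range this(2,1)]
  consider "L1_gap A B c = L1_gap A' B c + x"
    | "L1_gap A B c = L1_gap A' B (c - 1) + (2*pi - x)"
    | y B' where "B = add_mset y B'" "x \<le> y" "y < 2*pi" "L1_gap A B c = L1_gap A' B' c + (y - x)"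
    unfolding A' by blast
  then show ?thesis
  proof cases
    case 1
    then show ?thesis
      unfolding A' using x_range B
      by (intro gap_matchable_add_mset_zero[OF IH']) (auto simp: dist_circ_def)
  next
    case 2
    then show ?thesis
      unfolding A' using x_range B
      by (intro gap_matchable_add_mset_zero[OF IH']) (auto simp: dist_circ_def)
  next
    case 3
    have "gap_matchable A' B' c"
      using IH' 3(1) B by simp
    then show ?thesis
      using 3 unfolding A' 3(1) by (intro gap_matchable_add_mset) (auto simp: dist_circ_def)
  qed
qed

lemma gap_matchableI:
  assumes "set_mset A \<subseteq> {0<..<2*pi}" "set_mset B \<subseteq> {0<..<2*pi}"
  shows "gap_matchable A B c"
  using assms
proof (induction "size A + size B" arbitrary: A B c rule: less_induct)
  case (less A B c)
  show ?case
  proof (cases "A + B = {#}")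
    case True
    then show ?thesis
      using L1_gap_nonneg unfolding gap_matchable_def matching_def
      by (intro exI[of _ "{#}"]) (auto simp: cost_def)
  next
    case False
    define x where "x = Min (set_mset (A + B))"
    have least: "x \<le> z" if "z \<in># A + B" for z
      using that unfolding x_def by simp
    have "x \<in># A + B"
      unfolding x_def using False by (intro Min_in) auto
    then consider "x \<in># A" | "x \<in># B"
      by auto
    then show ?thesis
    proof cases
      case 1
      show ?thesis
        by (rule gap_matchable_least_left[OF less.hyps less.prems 1 least])
    next
      case 2
      have "gap_matchable B A (- c)"
        by (rule gap_matchable_least_left[OF _ less.prems(2,1) 2])
           (simp_all add: add.commute less.hyps least)
      then show ?thesis
        by (rule gap_matchable_commute)
    qed
  qed
qed

definition rig_mset :: "(real \<Rightarrow> enat) \<Rightarrow> real multiset" where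
  "rig_mset S = (\<Sum>x\<in>{x. x \<noteq> 0 \<and> S x \<noteq> 0}. replicate_mset (the_enat (S x)) x)"

lemma count_rig_mset:
  assumes "finite_rank S"
  shows "count (rig_mset S) x = (if x = 0 then 0 else the_enat (S x))"
proof -
  have "finite {x. x \<noteq> 0 \<and> S x \<noteq> 0}"
    using assms unfolding finite_rank_def by blast
  then show ?thesis
    by (simp add: rig_mset_def count_sum) (simp add: zero_enat_def)
qed

lemma rig_mset_in_range:
  assumes "S \<in> S1" "finite_rank S"
  shows "set_mset (rig_mset S) \<subseteq> {0<..<2*pi}"
proof
  fix x assume "x \<in># rig_mset S"
  then have "count (rig_mset S) x \<noteq> 0"
    by simp
  then have "x \<noteq> 0" "S x \<noteq> 0"
    by (auto simp: count_rig_mset[OF assms(2)] zero_enat_def split: if_splits)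
  then show "x \<in> {0<..<2*pi}"
    using assms(1) unfolding S1_def rigged_def by force
qed

lemma count_above_sum:
  "count_above (\<Sum>x\<in>V. f x) \<theta> = (\<Sum>x\<in>V. count_above (f x) \<theta>)"
  by (induction V rule: infinite_finite_induct) auto

lemma count_above_replicate_mset:
  "count_above (replicate_mset n x) \<theta> = of_nat n * indicator {..<x} \<theta>"
  by (induction n) (auto simp: algebra_simps)

lemma fS_eq_count_above:
  assumes "finite_rank S"
  shows "fS S \<theta> = count_above (rig_mset S) \<theta>"
proof -
  define V where "V = {x. x \<noteq> 0 \<and> S x \<noteq> 0}"
  have "finite V"
    using assms unfolding finite_rank_def V_def by blast
  have "fS S \<theta> = (\<Sum>x\<in>{x\<in>V. \<theta> < x}. real (the_enat (S x)))"
    unfolding fS_def V_def by simp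
  also have "\<dots> = (\<Sum>x\<in>V. real (the_enat (S x)) * indicator {..<x} \<theta>)"
    unfolding sum.inter_filter[OF \<open>finite V\<close>] by (intro sum.cong) (auto simp: indicator_def)
  also have "\<dots> = count_above (rig_mset S) \<theta>"
    by (simp add: rig_mset_def V_def count_above_sum count_above_replicate_mset)
  finally show ?thesis .
qed

lemma rho1_eq_Inf_L1_gap:
  assumes "finite_rank S" "finite_rank T"
  shows "rho1 (fS S) (fS T) = Inf (range (L1_gap (rig_mset S) (rig_mset T)))"
proof -
  have "integral {0..2*pi} (\<lambda>\<theta>. \<bar>(fS S \<theta> + of_int a) - (fS T \<theta> + of_int b)\<bar>) =
      L1_gap (rig_mset S) (rig_mset T) (b - a)" for a b :: int
    unfolding L1_gap_def fS_eq_count_above[OF assms(1)] fS_eq_count_above[OF assms(2)]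
    by (simp add: algebra_simps)
  then have "{integral {0..2*pi} (\<lambda>\<theta>. \<bar>(fS S \<theta> + of_int a) - (fS T \<theta> + of_int b)\<bar>) | a b :: int. True} =
      range (L1_gap (rig_mset S) (rig_mset T))"
    by (auto simp: image_iff) (metis diff_zero)
  then show ?thesis
    by (simp add: rho1_def)
qed

lemma enumerates_card:
  assumes "finite_rank S" "enumerates s S" "x \<noteq> 0"
  shows "finite {j. s j = x}" "card {j. s j = x} = the_enat (S x)"
proof -
  have "S x \<noteq> \<infinity>"
    using assms(1,3) unfolding finite_rank_def by blast
  moreover have "occ s x = S x"
    using assms(2) unfolding enumerates_def by blast
  ultimately show "finite {j. s j = x}" "card {j. s j = x} = the_enat (S x)"
    unfolding occ_def by (auto split: if_splits)
qed

lemma enumerates_value_nonzero: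
  assumes "enumerates s S"
  shows "S (s j) \<noteq> 0"
proof -
  have "{i. s i = s j} \<noteq> {}"
    by auto
  then have "occ s (s j) \<noteq> 0"
    unfolding occ_def by (auto simp: zero_enat_def)
  then show ?thesis
    using assms unfolding enumerates_def by simp
qed

lemma enumerates_in_range:
  "S \<in> S1 \<Longrightarrow> enumerates s S \<Longrightarrow> s j \<in> {0..<2*pi}"
  using enumerates_value_nonzero[of s S j] unfolding S1_def rigged_def by auto

lemma finite_support_enumerates:
  assumes "finite_rank S" "enumerates s S"
  shows "finite {j. s j \<noteq> 0}"
proof -
  have "{j. s j \<noteq> 0} = (\<Union>x\<in>{x. x \<noteq> 0 \<and> S x \<noteq> 0}. {j. s j = x})"
    using enumerates_value_nonzero[OF assms(2)] by auto
  then show ?thesis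
    using assms enumerates_card(1) unfolding finite_rank_def by auto
qed

lemma image_mset_enumerates:
  assumes "finite_rank S" "enumerates s S" "finite J" "{j. s j \<noteq> 0} \<subseteq> J"
  shows "\<exists>k. image_mset s (mset_set J) = rig_mset S + replicate_mset k 0"
proof (intro exI multiset_eqI)
  fix x
  have "{j \<in> J. s j = x} = {j. s j = x}" if "x \<noteq> 0"
    using that assms(4) by auto
  then show "count (image_mset s (mset_set J)) x =
      count (rig_mset S + replicate_mset (count (image_mset s (mset_set J)) 0) 0) x"
    using enumerates_card(2)[OF assms(1,2)]
    by (simp add: count_rig_mset[OF assms(1)] count_image_mset_eq_card_vimage[OF assms(3)])
qed

lemma enumerates_nth_default:
  assumes "finite_rank S" "S 0 = \<infinity>" "mset xs = rig_mset S + replicate_mset k 0"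
  shows "enumerates (nth_default 0 xs) S"
  unfolding enumerates_def
proof
  fix x :: real
  show "occ (nth_default 0 xs) x = S x"
  proof (cases "x = 0")
    case True
    have "{length xs..} \<subseteq> {j. nth_default 0 xs j = x}"
      using True by (auto simp: nth_default_beyond)
    then have "infinite {j. nth_default 0 xs j = x}"
      using infinite_Ici finite_subset by blast
    then show ?thesis
      using True assms(2) by (simp add: occ_def)
  next
    case False
    have fiber: "{j. nth_default 0 xs j = x} = {j. j < length xs \<and> xs ! j = x}"
      using False by (auto simp: nth_default_def)
    have "card {j. j < length xs \<and> xs ! j = x} = count (mset xs) x"
      by (simp add: count_mset count_list_eq_length_filter length_filter_conv_card eq_commute)
    also have "\<dots> = the_enat (S x)"
      using False by (simp add: assms(3) count_rig_mset[OF assms(1)])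
    finally show ?thesis
      using False assms(1) unfolding occ_def fiber finite_rank_def by auto
  qed
qed

lemma suminf_dist_circ_finite_support:
  assumes "finite J" "\<And>j. j \<notin> J \<Longrightarrow> s j = t j"
    and "\<And>j. s j \<in> {0..<2*pi}" "\<And>j. t j \<in> {0..<2*pi}"
  shows "(\<Sum>j. ennreal (dist_circ (s j) (t j))) = ennreal (\<Sum>j\<in>J. dist_circ (s j) (t j))"
proof -
  have "(\<Sum>j. ennreal (dist_circ (s j) (t j))) = (\<Sum>j\<in>J. ennreal (dist_circ (s j) (t j)))"
    using assms(1,2) by (intro suminf_finite) (auto simp: dist_circ_def)
  also have "\<dots> = ennreal (\<Sum>j\<in>J. dist_circ (s j) (t j))"
    using assms(3,4) by (intro sum_ennreal dist_circ_nonneg) (smt (verit) atLeastLessThan_iff)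
  finally show ?thesis .
qed

lemma matching_of_enumerations:
  assumes "S \<in> S1" "T \<in> S1" "finite_rank S" "finite_rank T" "enumerates s S" "enumerates t T"
  shows "\<exists>M. matching M (rig_mset S) (rig_mset T) \<and>
      ennreal (cost M) = (\<Sum>j. ennreal (dist_circ (s j) (t j)))"
proof -
  define J where "J = {j. s j \<noteq> 0} \<union> {j. t j \<noteq> 0}"
  have "finite J"
    unfolding J_def using finite_support_enumerates assms(3-6) by blast
  define M where "M = image_mset (\<lambda>j. (s j, t j)) (mset_set J)"
  have "matching M (rig_mset S) (rig_mset T)"
    using image_mset_enumerates[OF assms(3,5) \<open>finite J\<close>]
      image_mset_enumerates[OF assms(4,6) \<open>finite J\<close>]
    unfolding matching_def M_def J_def by (auto simp: image_mset.compositionality o_def)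
  moreover have "cost M = (\<Sum>j\<in>J. dist_circ (s j) (t j))"
    unfolding cost_def M_def by (simp add: sum_unfold_sum_mset image_mset.compositionality o_def)
  moreover have "(\<Sum>j. ennreal (dist_circ (s j) (t j))) = ennreal (\<Sum>j\<in>J. dist_circ (s j) (t j))"
    using \<open>finite J\<close> enumerates_in_range assms(1,2,5,6)
    by (intro suminf_dist_circ_finite_support) (auto simp: J_def)
  ultimately show ?thesis
    by auto
qed

lemma enumerations_of_matching:
  assumes "S \<in> S1" "T \<in> S1" "finite_rank S" "finite_rank T" "matching M (rig_mset S) (rig_mset T)"
  shows "\<exists>s t. enumerates s S \<and> enumerates t T \<and>
      (\<Sum>j. ennreal (dist_circ (s j) (t j))) = ennreal (cost M)"
proof -
  obtain xs where xs: "mset xs = M"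
    using ex_mset by blast
  define s where "s = nth_default 0 (map fst xs)"
  define t where "t = nth_default 0 (map snd xs)"
  have "S 0 = \<infinity>" "T 0 = \<infinity>"
    using assms(1,2) unfolding S1_def by auto
  then have enum: "enumerates s S" "enumerates t T"
    using assms(5) unfolding matching_def s_def t_def xs[symmetric]
    by (auto intro: enumerates_nth_default[OF assms(3)] enumerates_nth_default[OF assms(4)])
  have "(\<Sum>j. ennreal (dist_circ (s j) (t j))) = ennreal (\<Sum>j\<in>{..<length xs}. dist_circ (s j) (t j))"
    using enumerates_in_range assms(1,2) enum
    by (intro suminf_dist_circ_finite_support) (auto simp: s_def t_def nth_default_beyond)
  also have "(\<Sum>j\<in>{..<length xs}. dist_circ (s j) (t j)) = cost M"
    unfolding cost_def xs[symmetric]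
    by (simp add: sum_mset_sum_list sum_list_sum_nth atLeast0LessThan s_def t_def nth_default_nth
        flip: mset_map)
  finally show ?thesis
    using enum by blast
qed

lemma rdist_eq_INF_cost:
  assumes "S \<in> S1" "T \<in> S1" "finite_rank S" "finite_rank T"
  shows "rdist S T = (INF M\<in>{M. matching M (rig_mset S) (rig_mset T)}. ennreal (cost M))"
  unfolding rdist_def
proof (rule INF_eq)
  fix st assume "st \<in> {(s, t). enumerates s S \<and> enumerates t T}"
  then show "\<exists>M\<in>{M. matching M (rig_mset S) (rig_mset T)}.
      ennreal (cost M) \<le> (\<Sum>j. ennreal (dist_circ (fst st j) (snd st j)))"
    using matching_of_enumerations[OF assms] by force
next
  fix M assume "M \<in> {M. matching M (rig_mset S) (rig_mset T)}"
  then show "\<exists>st\<in>{(s, t). enumerates s S \<and> enumerates t T}.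
      (\<Sum>j. ennreal (dist_circ (fst st j) (snd st j))) \<le> ennreal (cost M)"
    using enumerations_of_matching[OF assms] by force
qed

lemma INF_ennreal_eq_Inf_range:
  fixes f :: "'a \<Rightarrow> real" and g :: "'b \<Rightarrow> real"
  assumes nonneg: "\<And>c. 0 \<le> g c"
    and upper: "\<And>c. \<exists>M\<in>K. f M \<le> g c" and lower: "\<And>M. M \<in> K \<Longrightarrow> \<exists>c. g c \<le> f M"
  shows "(INF M\<in>K. ennreal (f M)) = ennreal (Inf (range g))"
proof (rule antisym)
  have bdd: "bdd_below (range g)"
    using nonneg by (intro bdd_belowI) auto
  show "(INF M\<in>K. ennreal (f M)) \<le> ennreal (Inf (range g))"
  proof (rule ennreal_le_epsilon)
    fix e :: real assume "0 < e"
    then obtain c where c: "g c < Inf (range g) + e"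
      using cInf_lessD[of "range g" "Inf (range g) + e"] by auto
    obtain M where "M \<in> K" "f M \<le> g c"
      using upper by blast
    then have "(INF M\<in>K. ennreal (f M)) \<le> ennreal (Inf (range g) + e)"
      using c by (intro INF_lower2[of M] ennreal_leI) auto
    also have "\<dots> = ennreal (Inf (range g)) + ennreal e"
      using \<open>0 < e\<close> nonneg by (intro ennreal_plus cINF_greatest) auto
    finally show "(INF M\<in>K. ennreal (f M)) \<le> ennreal (Inf (range g)) + ennreal e" .
  qed
  show "ennreal (Inf (range g)) \<le> (INF M\<in>K. ennreal (f M))"
  proof (rule INF_greatest)
    fix M assume "M \<in> K"
    then obtain c where "g c \<le> f M"
      using lower by blast
    then show "ennreal (Inf (range g)) \<le> ennreal (f M)"
      using bdd by (intro ennreal_leI cInf_lower2[of "g c"]) auto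
  qed
qed

theorem mainTheorem13:
  assumes "S \<in> S1" and "T \<in> S1" and "finite_rank S" and "finite_rank T"
  shows "rdist S T = ennreal (rho1 (fS S) (fS T))"
proof -
  let ?A = "rig_mset S" and ?B = "rig_mset T"
  have range: "set_mset ?A \<subseteq> {0<..<2*pi}" "set_mset ?B \<subseteq> {0<..<2*pi}"
    using rig_mset_in_range assms by blast+
  have "rdist S T = (INF M\<in>{M. matching M ?A ?B}. ennreal (cost M))"
    using rdist_eq_INF_cost assms by blast
  also have "\<dots> = ennreal (Inf (range (L1_gap ?A ?B)))"
  proof (rule INF_ennreal_eq_Inf_range)
    show "\<exists>M\<in>{M. matching M ?A ?B}. cost M \<le> L1_gap ?A ?B c" for c
      using gap_matchableI[OF range] unfolding gap_matchable_def by blast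
    show "\<exists>c. L1_gap ?A ?B c \<le> cost M" if "M \<in> {M. matching M ?A ?B}" for M
      using matching_cost_lower[of M ?A ?B] that range by force
  qed (rule L1_gap_nonneg)
  also have "\<dots> = ennreal (rho1 (fS S) (fS T))"
    using rho1_eq_Inf_L1_gap assms by simp
  finally show ?thesis .
qed

end
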